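(* Let $V$ be a consistent sequence ($FI_{\mathscr{H}}$-module) and $a\ge0$. If $S_{+a}V$ is generated in degree $\le d$ for some finite $d$, then $V$ is generated in finite degree (i.e. in degree $\le d'$ for some finite $d'$).
   Context: $\mathscr{H}_n$ is the Iwahori–Hecke algebra of $\mathfrak{S}_n$ over a field $k$ of characteristic $0$ with parameter $q$ not a root of unity; $\tau:\mathscr{H}_n\to\mathscr{H}_{n+1}$, $T_{s_i}\mapsto T_{s_i}$. A consistent sequence is $V=(V_n,\phi_n)$ with $V_n$ an $\mathscr{H}_n$-module and $\phi_n:V_n\to V_{n+1}$ $k$-linear with $\phi_n(hv)=\tau(h)\phi_n(v)$. $S_{+a}V$ has $(S_{+a}V)_n=V_{n+a}$, viewed as an $\mathscr{H}_n$-module by restriction along $\mathscr{H}_n\subseteq\mathscr{H}_{n+a}$, with maps $\phi_{n+a}$. With $\phi_{n-1,i}=\phi_{n-1}\circ\cdots\circ\phi_i$ and, for $S=\bigsqcup S_n$, $\mathrm{span}(S)_n$ the $\mathscr{H}_n$-submodule generated by $\bigcup_{i<n}\phi_{n-1,i}(S_i)\cup S_n$, $V$ is generated in degree $\le d$ if $\mathrm{span}(\bigsqcup_{j\le d}V_j)=V$; "finite degree" means generated in degree $\le d$ for some $d$. *)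

theory Defs
  imports Complex_Main
begin

text \<open>All vector spaces V_n are realised as subspaces of one ambient k-vector space
  of type 'v with scalar multiplication sc (this is no loss of generality).\<close>

definition lin_on :: "('k \<Rightarrow> 'v::ab_group_add \<Rightarrow> 'v) \<Rightarrow> 'v set \<Rightarrow> ('v \<Rightarrow> 'v) \<Rightarrow> 'v set \<Rightarrow> bool" where
  "lin_on sc A f B \<longleftrightarrow>
     (\<forall>x\<in>A. f x \<in> B) \<and>
     (\<forall>x\<in>A. \<forall>y\<in>A. f (x + y) = f x + f y) \<and>
     (\<forall>c. \<forall>x\<in>A. f (sc c x) = sc c (f x))"

text \<open>An H_n-module structure on the subspace M: operators T i for the generators
  T_{s_i}, 1 <= i < n, satisfying the defining relations of the Iwahori-Hecke algebra
  (T_i - q)(T_i + 1) = 0, braid relations, far commutation.\<close>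

definition hecke_module ::
  "'k::field \<Rightarrow> ('k \<Rightarrow> 'v::ab_group_add \<Rightarrow> 'v) \<Rightarrow> nat \<Rightarrow> 'v set \<Rightarrow> (nat \<Rightarrow> 'v \<Rightarrow> 'v) \<Rightarrow> bool" where
  "hecke_module q sc n M T \<longleftrightarrow>
     module.subspace sc M \<and>
     (\<forall>i. 1 \<le> i \<and> i < n \<longrightarrow> lin_on sc M (T i) M) \<and>
     (\<forall>i. \<forall>v\<in>M. 1 \<le> i \<and> i < n \<longrightarrow>
         T i (T i v) = sc (q - 1) (T i v) + sc q v) \<and>
     (\<forall>i. \<forall>v\<in>M. 1 \<le> i \<and> i + 1 < n \<longrightarrow>
         T i (T (i+1) (T i v)) = T (i+1) (T i (T (i+1) v))) \<and>
     (\<forall>i j. \<forall>v\<in>M. 1 \<le> i \<and> i < n \<and> 1 \<le> j \<and> j < n \<and> i + 2 \<le> j \<longrightarrow>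
         T i (T j v) = T j (T i v))"

definition consistent_seq ::
  "'k::field \<Rightarrow> ('k \<Rightarrow> 'v::ab_group_add \<Rightarrow> 'v) \<Rightarrow> (nat \<Rightarrow> 'v set) \<Rightarrow> (nat \<Rightarrow> nat \<Rightarrow> 'v \<Rightarrow> 'v)
     \<Rightarrow> (nat \<Rightarrow> 'v \<Rightarrow> 'v) \<Rightarrow> bool" where
  "consistent_seq q sc V T phi \<longleftrightarrow>
     (\<forall>n. hecke_module q sc n (V n) (T n)) \<and>
     (\<forall>n. lin_on sc (V n) (phi n) (V (Suc n))) \<and>
     (\<forall>n i. \<forall>v\<in>V n. 1 \<le> i \<and> i < n \<longrightarrow> phi n (T n i v) = T (Suc n) i (phi n v))"

fun phis :: "(nat \<Rightarrow> 'v \<Rightarrow> 'v) \<Rightarrow> nat \<Rightarrow> nat \<Rightarrow> 'v \<Rightarrow> 'v" where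
  "phis phi i 0 = id"
| "phis phi i (Suc j) = (if i \<le> j then phi j \<circ> phis phi i j else id)"

text \<open>The H_n-submodule generated by S: the smallest subspace containing S and
  stable under all T_{s_i}, 1 <= i < n (these generate H_n as a k-algebra).\<close>

definition hspan :: "('k::field \<Rightarrow> 'v::ab_group_add \<Rightarrow> 'v) \<Rightarrow> nat \<Rightarrow> (nat \<Rightarrow> 'v \<Rightarrow> 'v) \<Rightarrow> 'v set \<Rightarrow> 'v set" where
  "hspan sc n T S = \<Inter>{W. module.subspace sc W \<and> S \<subseteq> W \<and>
                           (\<forall>i. 1 \<le> i \<and> i < n \<longrightarrow> (\<forall>w\<in>W. T i w \<in> W))}"

definition seq_span ::
  "('k::field \<Rightarrow> 'v::ab_group_add \<Rightarrow> 'v) \<Rightarrow> (nat \<Rightarrow> nat \<Rightarrow> 'v \<Rightarrow> 'v) \<Rightarrow> (nat \<Rightarrow> 'v \<Rightarrow> 'v)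
     \<Rightarrow> (nat \<Rightarrow> 'v set) \<Rightarrow> nat \<Rightarrow> 'v set" where
  "seq_span sc T phi S n = hspan sc n (T n) ((\<Union>i<n. phis phi i n ` S i) \<union> S n)"

definition generated_in_degree_le ::
  "('k::field \<Rightarrow> 'v::ab_group_add \<Rightarrow> 'v) \<Rightarrow> (nat \<Rightarrow> 'v set) \<Rightarrow> (nat \<Rightarrow> nat \<Rightarrow> 'v \<Rightarrow> 'v)
     \<Rightarrow> (nat \<Rightarrow> 'v \<Rightarrow> 'v) \<Rightarrow> nat \<Rightarrow> bool" where
  "generated_in_degree_le sc V T phi d \<longleftrightarrow>
     (\<forall>n. seq_span sc T phi (\<lambda>j. if j \<le> d then V j else {}) n = V n)"

text \<open>The shift S_{+a}: degree n is V (n+a) restricted along H_n \<subseteq> H_{n+a}.\<close>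

definition shift_carrier :: "nat \<Rightarrow> (nat \<Rightarrow> 'v set) \<Rightarrow> nat \<Rightarrow> 'v set" where
  "shift_carrier a V n = V (n + a)"
definition shift_T :: "nat \<Rightarrow> (nat \<Rightarrow> nat \<Rightarrow> 'v \<Rightarrow> 'v) \<Rightarrow> nat \<Rightarrow> nat \<Rightarrow> 'v \<Rightarrow> 'v" where
  "shift_T a T n = T (n + a)"
definition shift_phi :: "nat \<Rightarrow> (nat \<Rightarrow> 'v \<Rightarrow> 'v) \<Rightarrow> nat \<Rightarrow> 'v \<Rightarrow> 'v" where
  "shift_phi a phi n = phi (n + a)"

end

theory Submission
  imports Defs
begin

text \<open>Generators of the shifted sequence in degree m are generators of V in degree m + a,
  and H_m acts on V (m + a) through H_{m+a}; so every degree m + a is already spanned by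
  V_0, ..., V_{d+a}, and the degrees below a are trivially so. Hence V is generated in
  degree at most d + a.\<close>

lemma hspan_least:
  assumes "module.subspace sc W" "S \<subseteq> W" "\<forall>i. 1 \<le> i \<and> i < n \<longrightarrow> (\<forall>w\<in>W. T i w \<in> W)"
  shows "hspan sc n T S \<subseteq> W"
  using assms unfolding hspan_def by blast

lemma hspan_superset: "S \<subseteq> hspan sc n T S"
  unfolding hspan_def by blast

lemma hspan_mono:
  assumes "m \<le> n" "S \<subseteq> S'"
  shows "hspan sc m T S \<subseteq> hspan sc n T S'"
  unfolding hspan_def using assms by auto

lemma phis_id: "n \<le> i \<Longrightarrow> phis phi i n = id"
  by (induction n) auto

lemma phis_shift_phi: "phis (shift_phi a phi) i m = phis phi (i + a) (m + a)"
  by (induction m) (auto simp: phis_id shift_phi_def)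

lemma phis_in:
  assumes "\<forall>n. lin_on sc (V n) (phi n) (V (Suc n))" "i \<le> n" "v \<in> V i"
  shows "phis phi i n v \<in> V n"
  using assms(2,3)
proof (induction n)
  case (Suc n)
  show ?case
  proof (cases "i \<le> n")
    case True
    with Suc have "phis phi i n v \<in> V n" by simp
    with True assms(1) show ?thesis unfolding lin_on_def by auto
  next
    case False
    with Suc have "i = Suc n" by simp
    with Suc show ?thesis by simp
  qed
qed simp

lemma seq_span_superset: "S n \<subseteq> seq_span sc T phi S n"
  unfolding seq_span_def using hspan_superset by blast

lemma seq_span_subset_carrier:
  assumes "consistent_seq q sc V T phi" "\<And>j. S j \<subseteq> V j"
  shows "seq_span sc T phi S n \<subseteq> V n"
  unfolding seq_span_def
proof (rule hspan_least)
  have hecke: "hecke_module q sc n (V n) (T n)"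
    and lin: "\<forall>n. lin_on sc (V n) (phi n) (V (Suc n))"
    using assms(1) unfolding consistent_seq_def by blast+
  from hecke show "module.subspace sc (V n)"
    unfolding hecke_module_def by (rule conjunct1)
  from hecke have "\<forall>i. 1 \<le> i \<and> i < n \<longrightarrow> lin_on sc (V n) (T n i) (V n)"
    unfolding hecke_module_def by (rule conjunct1[OF conjunct2])
  then show "\<forall>i. 1 \<le> i \<and> i < n \<longrightarrow> (\<forall>w\<in>V n. T n i w \<in> V n)"
    unfolding lin_on_def by blast
  have "phis phi i n v \<in> V n" if "i < n" "v \<in> S i" for i v
    using phis_in[OF lin, of i n v] that assms(2) by auto
  with assms(2) show "(\<Union>i<n. phis phi i n ` S i) \<union> S n \<subseteq> V n"
    by blast
qed

lemma seq_span_shift_subset: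
  "seq_span sc (shift_T a T) (shift_phi a phi) (\<lambda>j. S (j + a)) m \<subseteq> seq_span sc T phi S (m + a)"
  unfolding seq_span_def shift_T_def phis_shift_phi
proof (rule hspan_mono)
  have "phis phi (i + a) (m + a) ` S (i + a) \<subseteq> (\<Union>j<m + a. phis phi j (m + a) ` S j)"
    if "i < m" for i
    using that by (intro UN_upper) simp
  then show "(\<Union>i<m. phis phi (i + a) (m + a) ` S (i + a)) \<union> S (m + a)
      \<subseteq> (\<Union>j<m + a. phis phi j (m + a) ` S j) \<union> S (m + a)"
    by blast
qed simp

theorem lemma5p3:
  fixes q :: "'k::field_char_0"
    and sc :: "'k \<Rightarrow> 'v::ab_group_add \<Rightarrow> 'v"
    and V :: "nat \<Rightarrow> 'v set" and T :: "nat \<Rightarrow> nat \<Rightarrow> 'v \<Rightarrow> 'v" and phi :: "nat \<Rightarrow> 'v \<Rightarrow> 'v"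
    and a d :: nat
  assumes "vector_space sc"
    and "q \<noteq> 0"
    and "\<forall>m::nat. m > 0 \<longrightarrow> q ^ m \<noteq> 1"
    and "consistent_seq q sc V T phi"
    and "generated_in_degree_le sc (shift_carrier a V) (shift_T a T) (shift_phi a phi) d"
  shows "\<exists>d'. generated_in_degree_le sc V T phi d'"
proof
  define S where "S = (\<lambda>j. if j \<le> d + a then V j else {})"
  have shift_gen: "seq_span sc (shift_T a T) (shift_phi a phi) (\<lambda>j. S (j + a)) m = V (m + a)" for m
    using assms(5) unfolding generated_in_degree_le_def shift_carrier_def S_def by simp
  have "seq_span sc T phi S n = V n" for n
  proof (rule equalityI)
    show "seq_span sc T phi S n \<subseteq> V n"
      using seq_span_subset_carrier[OF assms(4)] by (simp add: S_def)
    show "V n \<subseteq> seq_span sc T phi S n"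
    proof (cases "a \<le> n")
      case True
      define m where "m = n - a"
      with True have "n = m + a" by simp
      then show ?thesis using shift_gen[of m] seq_span_shift_subset[of sc a T phi S m] by simp
    next
      case False
      then show ?thesis using seq_span_superset[of S n] by (simp add: S_def)
    qed
  qed
  then show "generated_in_degree_le sc V T phi (d + a)"
    unfolding generated_in_degree_le_def S_def[symmetric] by blast
qed

end
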